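(* Let $n\ge1$, $m=2n$, let $\delta_1,\delta_2>0$, and for $k,k'\in\{1,2\}$ let $\hat g_{k,k'}(u)=\int_{[0,\infty)}e^{-uz}\,dG_{k,k'}(z)$ be the Laplace transform of a probability distribution $G_{k,k'}$ on $[0,\infty)$. For $(v_1,\ldots,v_m)\in\mathbb{R}_+^m$ define functions $l_1,\ldots,l_m$ on $[0,\infty)$ by $l_1(t)=v_{2n}e^{-\delta_2 t}$, $l_2(t)=v_{2n-1}e^{-\delta_1 t}$, and for $k=1,\ldots,n-1$, $$l_{2k+1}(t)=v_{2(n-k)}e^{-\delta_2 t}+e^{-\delta_2 t}\int_0^t e^{\delta_2 s}\big[1-\hat g_{1,2}(l_{2k}(s))+1-\hat g_{2,2}(l_{2k-1}(s))\big]ds,$$ $$l_{2k+2}(t)=v_{2(n-k)-1}e^{-\delta_1 t}+e^{-\delta_1 t}\int_0^t e^{\delta_1 s}\big[1-\hat g_{1,1}(l_{2k}(s))+1-\hat g_{2,1}(l_{2k-1}(s))\big]ds.$$ Then for every $i=1,\ldots,m$ and every $(v_1,\ldots,v_m)\in\mathbb{R}_+^m$, $\lim_{t\to\infty}l_i(t)=0$.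
   Context: These functions are the (unique) solution of the forward ODE system $\dot l_1+\delta_2 l_1=0$, $\dot l_2+\delta_1 l_2=0$, $\dot l_{2k+1}+\delta_2 l_{2k+1}-(1-\hat g_{1,2}(l_{2k}))-(1-\hat g_{2,2}(l_{2k-1}))=0$, $\dot l_{2k+2}+\delta_1 l_{2k+2}-(1-\hat g_{1,1}(l_{2k}))-(1-\hat g_{2,1}(l_{2k-1}))=0$ with the stated initial values. *)

theory Defs
  imports "HOL-Probability.Probability"
begin

text \<open>A probability distribution on [0,\<infinity>), represented as a probability measure on the
Borel sets of the reals giving no mass to (-\<infinity>,0).\<close>
definition prob_dist_nonneg :: "real measure \<Rightarrow> bool" where
  "prob_dist_nonneg G \<longleftrightarrow> prob_space G \<and> sets G = sets borel \<and> measure G {..<0} = 0"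

definition laplace :: "real measure \<Rightarrow> real \<Rightarrow> real" where
  "laplace G u = (\<integral>z. exp (- u * z) \<partial>G)"

text \<open>lpair n v d1 d2 g11 g12 g21 g22 k = (l_{2k+1}, l_{2k+2}); v is indexed 1..2n.\<close>
fun lpair :: "nat \<Rightarrow> (nat \<Rightarrow> real) \<Rightarrow> real \<Rightarrow> real \<Rightarrow>
    (real \<Rightarrow> real) \<Rightarrow> (real \<Rightarrow> real) \<Rightarrow> (real \<Rightarrow> real) \<Rightarrow> (real \<Rightarrow> real) \<Rightarrow>
    nat \<Rightarrow> (real \<Rightarrow> real) \<times> (real \<Rightarrow> real)" where
  "lpair n v d1 d2 g11 g12 g21 g22 0 =
     ((\<lambda>t. v (2*n) * exp (- d2 * t)), (\<lambda>t. v (2*n - 1) * exp (- d1 * t)))"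
| "lpair n v d1 d2 g11 g12 g21 g22 (Suc k) =
     (let a = fst (lpair n v d1 d2 g11 g12 g21 g22 k);
          b = snd (lpair n v d1 d2 g11 g12 g21 g22 k)
      in ((\<lambda>t. v (2*(n - Suc k)) * exp (- d2 * t) + exp (- d2 * t) *
               integral {0..t} (\<lambda>s. exp (d2 * s) * ((1 - g12 (b s)) + (1 - g22 (a s))))),
          (\<lambda>t. v (2*(n - Suc k) - 1) * exp (- d1 * t) + exp (- d1 * t) *
               integral {0..t} (\<lambda>s. exp (d1 * s) * ((1 - g11 (b s)) + (1 - g21 (a s)))))))"

definition lfun :: "nat \<Rightarrow> (nat \<Rightarrow> real) \<Rightarrow> real \<Rightarrow> real \<Rightarrow>
    (real \<Rightarrow> real) \<Rightarrow> (real \<Rightarrow> real) \<Rightarrow> (real \<Rightarrow> real) \<Rightarrow> (real \<Rightarrow> real) \<Rightarrow>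
    nat \<Rightarrow> real \<Rightarrow> real" where
  "lfun n v d1 d2 g11 g12 g21 g22 i =
     (if odd i then fst (lpair n v d1 d2 g11 g12 g21 g22 ((i - 1) div 2))
      else snd (lpair n v d1 d2 g11 g12 g21 g22 ((i - 2) div 2)))"

end

theory Submission
  imports Defs "HOL-Real_Asymp.Real_Asymp"
begin

text \<open>By induction along the recursion, each pair (l_{2k+1}, l_{2k+2}) consists of functions
that are nonnegative, continuous on [0,\<infinity>) and tend to 0. For the step, 1 - g(l(s)) tends
to 0 because a Laplace transform g is continuous on [0,\<infinity>) with g(0) = 1, and the
exponentially weighted average e^(-d t) \<integral>[0,t] e^(d s) f(s) ds of a function f tending
to 0 tends to 0 as well (by L'Hopital's rule). Nonnegativity of the l_i keeps the arguments of
the transforms in [0,\<infinity>), where they are bounded by 1 and continuous.\<close>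

lemma prob_dist_nonnegD:
  assumes "prob_dist_nonneg G"
  shows "prob_space G" and "AE z in G. 0 \<le> z"
    and "\<And>f :: real \<Rightarrow> real. f \<in> borel_measurable borel \<Longrightarrow> f \<in> borel_measurable G"
proof -
  have ps: "prob_space G" and sets: "sets G = sets borel" and neg: "measure G {..<0} = 0"
    using assms unfolding prob_dist_nonneg_def by auto
  show "prob_space G" by fact
  show "f \<in> borel_measurable G" if "f \<in> borel_measurable borel" for f :: "real \<Rightarrow> real"
    using that measurable_cong_sets[OF sets refl] by blast
  have "emeasure G {..<0} = 0"
    using sets neg ps by (simp add: finite_measure.emeasure_eq_measure prob_space.finite_measure)
  then have "{..<0::real} \<in> null_sets G" using sets by (simp add: null_sets_def)
  then show "AE z in G. 0 \<le> z"
    by (rule AE_I') (auto simp: sets_eq_imp_space_eq[OF sets])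
qed

lemma laplace_integrand_bounded:
  assumes "prob_dist_nonneg G" "0 \<le> u"
  shows "AE z in G. norm (exp (- u * z)) \<le> 1"
  using prob_dist_nonnegD(2)[OF assms(1)]
  by eventually_elim (use assms(2) in \<open>auto simp: mult_nonneg_nonneg\<close>)

lemma laplace_nonneg: "0 \<le> laplace G u"
  unfolding laplace_def by (rule integral_nonneg_AE) simp

lemma laplace_le_1:
  assumes "prob_dist_nonneg G" "0 \<le> u"
  shows "laplace G u \<le> 1"
proof -
  interpret prob_space G using prob_dist_nonnegD(1)[OF assms(1)] .
  have bounded: "AE z in G. norm (exp (- u * z)) \<le> 1"
    by (rule laplace_integrand_bounded[OF assms])
  have "integrable G (\<lambda>z. exp (- u * z))"
    by (rule integrable_const_bound[OF bounded]) (simp add: prob_dist_nonnegD(3)[OF assms(1)])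
  then have "laplace G u \<le> (\<integral>z. 1 \<partial>G)"
    unfolding laplace_def by (rule integral_mono_AE) (use bounded in auto)
  then show ?thesis by (simp add: prob_space)
qed

lemma laplace_0: "prob_dist_nonneg G \<Longrightarrow> laplace G 0 = 1"
  using prob_dist_nonnegD(1) prob_space.prob_space
  by (simp add: laplace_def prob_space.emeasure_space_1 measure_def)

lemma continuous_on_laplace:
  assumes "prob_dist_nonneg G"
  shows "continuous_on {0..} (laplace G)"
proof (rule continuous_on_sequentiallyI)
  interpret prob_space G using prob_dist_nonnegD(1)[OF assms] .
  fix x a assume x: "\<forall>n. x n \<in> {0::real..}" and "x \<longlonglongrightarrow> a"
  show "(\<lambda>n. laplace G (x n)) \<longlonglongrightarrow> laplace G a"
    unfolding laplace_def
  proof (rule integral_dominated_convergence[where w = "\<lambda>_. 1"])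
    show "AE z in G. (\<lambda>n. exp (- x n * z)) \<longlonglongrightarrow> exp (- a * z)"
      by (intro AE_I2 tendsto_intros \<open>x \<longlonglongrightarrow> a\<close>)
    show "AE z in G. norm (exp (- x n * z)) \<le> 1" for n
      using laplace_integrand_bounded[OF assms] x by simp
  qed (simp_all add: prob_dist_nonnegD(3)[OF assms])
qed

lemma tendsto_exp_weighted_integral_0:
  fixes c :: real and f :: "real \<Rightarrow> real"
  assumes c: "c > 0" and cont: "\<And>b. continuous_on {0..b} f" and lim: "(f \<longlongrightarrow> 0) at_top"
  shows "((\<lambda>t. exp (- c * t) * integral {0..t} (\<lambda>s. exp (c * s) * f s)) \<longlongrightarrow> 0) at_top"
proof -
  let ?h = "\<lambda>s. exp (c * s) * f s"
  have "((\<lambda>t. integral {0..t} ?h / exp (c * t)) \<longlongrightarrow> 0 / c) at_top"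
  proof (rule lhospital_at_top_at_top[where g' = "\<lambda>t. c * exp (c * t)" and f' = ?h])
    show "filterlim (\<lambda>t. exp (c * t)) at_top at_top" using c by real_asymp
    show "\<forall>\<^sub>F t in at_top. ((\<lambda>t. exp (c * t)) has_real_derivative c * exp (c * t)) (at t)"
      by (intro always_eventually allI) (auto intro!: derivative_eq_intros)
    show "\<forall>\<^sub>F t in at_top. ((\<lambda>t. integral {0..t} ?h) has_real_derivative ?h t) (at t)"
      using eventually_gt_at_top[of 0]
    proof eventually_elim
      case (elim t)
      have "((\<lambda>u. integral {0..u} ?h) has_vector_derivative ?h t) (at t within {0..t+1})"
        by (rule integral_has_vector_derivative) (use elim in \<open>auto intro!: continuous_intros cont\<close>)
      moreover have "at t within {0..t+1} = at t"
        by (rule at_within_interior) (use elim in auto)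
      ultimately show ?case by (simp add: has_real_derivative_iff_has_vector_derivative)
    qed
    have "((\<lambda>t. f t / c) \<longlongrightarrow> 0 / c) at_top" using c by (intro tendsto_intros lim) auto
    then show "((\<lambda>t. ?h t / (c * exp (c * t))) \<longlongrightarrow> 0 / c) at_top"
      using c by simp
  qed (use c in simp)
  then show ?thesis
    by (simp add: exp_minus field_simps mult_minus_left)
qed

text \<open>The properties of a Laplace transform of a distribution on [0,\<infinity>) that the argument uses.\<close>
definition transform_like :: "(real \<Rightarrow> real) \<Rightarrow> bool" where
  "transform_like g \<longleftrightarrow> (\<forall>u\<ge>0. 0 \<le> g u \<and> g u \<le> 1) \<and> g 0 = 1 \<and> continuous_on {0..} g"

definition vanishing_profile :: "(real \<Rightarrow> real) \<Rightarrow> bool" where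
  "vanishing_profile a \<longleftrightarrow>
     (\<forall>t\<ge>0. 0 \<le> a t) \<and> (\<forall>b. continuous_on {0..b} a) \<and> (a \<longlongrightarrow> 0) at_top"

lemma transform_like_laplace: "prob_dist_nonneg G \<Longrightarrow> transform_like (laplace G)"
  unfolding transform_like_def
  using laplace_nonneg laplace_le_1 laplace_0 continuous_on_laplace by blast

lemma vanishing_profile_exp:
  assumes "d > 0" "w \<ge> 0"
  shows "vanishing_profile (\<lambda>t. w * exp (- d * t))"
proof -
  have "((\<lambda>t. w * exp (- d * t)) \<longlongrightarrow> 0) at_top" using assms(1) by real_asymp
  then show ?thesis
    unfolding vanishing_profile_def using assms by (auto intro!: continuous_intros)
qed

lemma continuous_on_transform_comp:
  assumes "transform_like g" "vanishing_profile a"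
  shows "continuous_on {0..b} (\<lambda>s. g (a s))"
proof (rule continuous_on_compose2[of "{0..}" g])
  show "continuous_on {0..} g" using assms(1) unfolding transform_like_def by blast
  show "continuous_on {0..b} a" "a ` {0..b} \<subseteq> {0..}"
    using assms(2) unfolding vanishing_profile_def by auto
qed

lemma tendsto_transform_comp:
  assumes g: "transform_like g" and a: "vanishing_profile a"
  shows "((\<lambda>s. g (a s)) \<longlongrightarrow> 1) at_top"
proof -
  have "continuous (at 0 within {0..}) g"
    using g by (simp add: transform_like_def continuous_on_eq_continuous_within)
  moreover have "\<forall>\<^sub>F t in at_top. a t \<in> {0..}"
    using a unfolding vanishing_profile_def
    by (auto intro: eventually_mono[OF eventually_ge_at_top[of 0]])
  moreover have "(a \<longlongrightarrow> 0) at_top" using a unfolding vanishing_profile_def by auto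
  ultimately have "((\<lambda>s. g (a s)) \<longlongrightarrow> g 0) at_top" by (rule continuous_within_tendsto_compose)
  then show ?thesis using g unfolding transform_like_def by simp
qed

lemma vanishing_profile_step:
  assumes d: "d > 0" and w: "w \<ge> 0" and g1: "transform_like g1" and g2: "transform_like g2"
    and a: "vanishing_profile a" and b: "vanishing_profile b"
  shows "vanishing_profile (\<lambda>t. w * exp (- d * t) + exp (- d * t) *
           integral {0..t} (\<lambda>s. exp (d * s) * ((1 - g1 (b s)) + (1 - g2 (a s)))))"
proof -
  let ?q = "\<lambda>s. (1 - g1 (b s)) + (1 - g2 (a s))"
  let ?h = "\<lambda>s. exp (d * s) * ?q s"
  have q_cont: "continuous_on {0..c} ?q" for c
    by (intro continuous_intros continuous_on_transform_comp g1 g2 a b)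
  have h_int: "?h integrable_on {0..t}" for t
    by (intro integrable_continuous_interval continuous_intros q_cont)
  have q_nonneg: "0 \<le> ?q s" if "s \<ge> 0" for s
    using g1 g2 a b that unfolding transform_like_def vanishing_profile_def by (smt (verit))
  have q_lim: "(?q \<longlongrightarrow> 0) at_top"
    using tendsto_add[OF tendsto_diff[OF tendsto_const tendsto_transform_comp[OF g1 b]]
        tendsto_diff[OF tendsto_const tendsto_transform_comp[OF g2 a]], of 1 1]
    by simp
  have integral_nonneg: "0 \<le> integral {0..t} ?h" for t
    by (rule integral_nonneg[OF h_int]) (use q_nonneg in auto)
  show ?thesis unfolding vanishing_profile_def
  proof (intro conjI allI impI)
    show "0 \<le> w * exp (- d * t) + exp (- d * t) * integral {0..t} ?h" for t
      using w integral_nonneg[of t] by simp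
    show "continuous_on {0..c} (\<lambda>t. w * exp (- d * t) + exp (- d * t) * integral {0..t} ?h)"
      for c using indefinite_integral_continuous_1[OF h_int] by (intro continuous_intros)
    have "((\<lambda>t. w * exp (- d * t)) \<longlongrightarrow> 0) at_top"
      using vanishing_profile_exp[OF d w] unfolding vanishing_profile_def by blast
    then show "((\<lambda>t. w * exp (- d * t) + exp (- d * t) * integral {0..t} ?h) \<longlongrightarrow> 0) at_top"
      using tendsto_exp_weighted_integral_0[OF d q_cont q_lim] by (rule tendsto_add_zero)
  qed
qed

lemma vanishing_profile_lpair:
  assumes d1: "d1 > 0" and d2: "d2 > 0"
    and g: "transform_like g11" "transform_like g12" "transform_like g21" "transform_like g22"
    and v: "\<forall>j\<in>{1..2*n}. v j \<ge> 0" and "k < n"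
  shows "vanishing_profile (fst (lpair n v d1 d2 g11 g12 g21 g22 k))
       \<and> vanishing_profile (snd (lpair n v d1 d2 g11 g12 g21 g22 k))"
  using \<open>k < n\<close>
proof (induction k)
  case 0
  then have "v (2*n) \<ge> 0" "v (2*n - 1) \<ge> 0" using v by auto
  then show ?case using vanishing_profile_exp d1 d2 by simp
next
  case (Suc k)
  then have "2*(n - Suc k) \<in> {1..2*n}" "2*(n - Suc k) - 1 \<in> {1..2*n}" by auto
  then have "v (2*(n - Suc k)) \<ge> 0" "v (2*(n - Suc k) - 1) \<ge> 0" using v by blast+
  with Suc show ?case
    using vanishing_profile_step[OF d2 _ g(2,4)] vanishing_profile_step[OF d1 _ g(1,3)]
    by (simp add: Let_def)
qed

theorem mainTheorem1:
  fixes n :: nat and d1 d2 :: real and G11 G12 G21 G22 :: "real measure"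
    and v :: "nat \<Rightarrow> real" and i :: nat
  assumes "n \<ge> 1"
    and "d1 > 0" and "d2 > 0"
    and "prob_dist_nonneg G11" and "prob_dist_nonneg G12"
    and "prob_dist_nonneg G21" and "prob_dist_nonneg G22"
    and "\<forall>j\<in>{1..2*n}. v j \<ge> 0"
    and "i \<in> {1..2*n}"
  shows "(lfun n v d1 d2 (laplace G11) (laplace G12) (laplace G21) (laplace G22) i
           \<longlongrightarrow> 0) at_top"
proof -
  note profiles = vanishing_profile_lpair[OF assms(2,3) transform_like_laplace[OF assms(4)]
      transform_like_laplace[OF assms(5)] transform_like_laplace[OF assms(6)]
      transform_like_laplace[OF assms(7)] assms(8)]
  have "vanishing_profile (lfun n v d1 d2 (laplace G11) (laplace G12) (laplace G21) (laplace G22) i)"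
  proof (cases "odd i")
    case True
    moreover have "(i - 1) div 2 < n" using assms(9) by auto
    ultimately show ?thesis using profiles by (simp add: lfun_def)
  next
    case False
    moreover have "(i - 2) div 2 < n" using assms(9) by auto
    ultimately show ?thesis using profiles by (simp add: lfun_def)
  qed
  then show ?thesis unfolding vanishing_profile_def by blast
qed

end
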